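(* For every formula $A$ of $\mathbf{L_1}$, if not $\vdash_H A$, then $\dashv_H A$. That is, every formula satisfies $\vdash_H A$ or $\dashv_H A$.
   Context: Formulas of $\mathbf{L_1}$: built from atomic formulas $\epsilon ab$ ($a,b$ name variables, possibly equal) with primitive connectives $\vee,\sim$; $\wedge,\supset,\equiv$ defined as usual. Disjunctions may be associated in any way. $\vdash_H A$: $A$ belongs to the smallest set containing all instances of classical propositional tautologies and all formulas $\epsilon ab\supset\epsilon aa$, $(\epsilon ab\wedge\epsilon bc)\supset\epsilon ac$, $(\epsilon ab\wedge\epsilon bb)\supset\epsilon ba$, closed under modus ponens. Positive/negative parts (occurrences): $A$ is a positive part of $A$; if $B\vee C$ is a positive part then $B,C$ are positive parts; if $\sim B$ is a positive part then $B$ is a negative part; if $\sim B$ is a negative part then $B$ is a positive part. $F[B_+,B_-]$ denotes a formula in which some formula $B$ has one occurrence as positive part and another non-overlapping occurrence as negative part. Hintikka formula: a formula $H$ such that (1) $H$ is not of the form $F[B_+,B_-]$; (2) if $B\vee C$ is a negative part of $H$ then $B$ or $C$ is; (3) if $\epsilon ab$ is a negative part then so is $\epsilon aa$; (4) if $\epsilon ab,\epsilon bc$ are negative parts then so is $\epsilon ac$; (5) if $\epsilon ab,\epsilon bb$ are negative parts then so is $\epsilon ba$. $\mathbf{HAR}$: fix a name variable $a_0$; $\dashv_H$ is the smallest set such that $\dashv_H\epsilon a_0a_0$; $\dashv_H\sim\epsilon a_0a_0$; if $\vdash_H A\supset B$ and $\dashv_H B$ then $\dashv_H A$; if $\dashv_H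 A$ and $A$ is obtained from $B$ by uniform substitution of name variables for name variables then $\dashv_H B$; if $A$ is a Hintikka formula that is a disjunction of atomic or negated atomic formulas, $\dashv_H A$, and $\epsilon ab$ is not a negative part of $A$, then $\dashv_H A\vee\epsilon ab$. *)

theory Defs
  imports Main
begin

datatype fm = Eps nat nat | Disj fm fm | Neg fm

definition Conj :: "fm \<Rightarrow> fm \<Rightarrow> fm" where
  "Conj A B = Neg (Disj (Neg A) (Neg B))"
definition Imp :: "fm \<Rightarrow> fm \<Rightarrow> fm" where
  "Imp A B = Disj (Neg A) B"

fun evalf :: "(nat \<Rightarrow> nat \<Rightarrow> bool) \<Rightarrow> fm \<Rightarrow> bool" where
  "evalf v (Eps a b) = v a b"
| "evalf v (Disj A B) = (evalf v A \<or> evalf v B)"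
| "evalf v (Neg A) = (\<not> evalf v A)"

definition taut :: "fm \<Rightarrow> bool" where
  "taut A = (\<forall>v. evalf v A)"

inductive provH :: "fm \<Rightarrow> bool" where
  taut: "taut A \<Longrightarrow> provH A"
| ax1: "provH (Imp (Eps a b) (Eps a a))"
| ax2: "provH (Imp (Conj (Eps a b) (Eps b c)) (Eps a c))"
| ax3: "provH (Imp (Conj (Eps a b) (Eps b b)) (Eps b a))"
| mp: "provH (Imp A B) \<Longrightarrow> provH A \<Longrightarrow> provH B"

fun subAt :: "fm \<Rightarrow> nat list \<Rightarrow> fm option" where
  "subAt A [] = Some A"
| "subAt (Disj B C) (0 # p) = subAt B p"
| "subAt (Disj B C) (Suc 0 # p) = subAt C p"
| "subAt (Neg B) (0 # p) = subAt B p"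
| "subAt _ _ = None"

text \<open>Polarity of the occurrence at a path (True = positive), when the path is valid.\<close>
fun polAt :: "fm \<Rightarrow> nat list \<Rightarrow> bool" where
  "polAt A [] = True"
| "polAt (Disj B C) (0 # p) = polAt B p"
| "polAt (Disj B C) (Suc 0 # p) = polAt C p"
| "polAt (Neg B) (0 # p) = (\<not> polAt B p)"
| "polAt _ _ = True"

definition posOcc :: "fm \<Rightarrow> nat list \<Rightarrow> fm \<Rightarrow> bool" where
  "posOcc H p B = (subAt H p = Some B \<and> polAt H p)"
definition negOcc :: "fm \<Rightarrow> nat list \<Rightarrow> fm \<Rightarrow> bool" where
  "negOcc H p B = (subAt H p = Some B \<and> \<not> polAt H p)"

definition negPart :: "fm \<Rightarrow> fm \<Rightarrow> bool" where
  "negPart B H = (\<exists>p. negOcc H p B)"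

text \<open>H is of the form F[B+,B-]: some B occurs positively and, at a non-overlapping
  position, negatively.\<close>
definition clash :: "fm \<Rightarrow> bool" where
  "clash H = (\<exists>B p q. posOcc H p B \<and> negOcc H q B \<and>
                       \<not> (\<exists>r. q = p @ r) \<and> \<not> (\<exists>r. p = q @ r))"

definition hintikka :: "fm \<Rightarrow> bool" where
  "hintikka H = (\<not> clash H
    \<and> (\<forall>B C. negPart (Disj B C) H \<longrightarrow> negPart B H \<or> negPart C H)
    \<and> (\<forall>a b. negPart (Eps a b) H \<longrightarrow> negPart (Eps a a) H)
    \<and> (\<forall>a b c. negPart (Eps a b) H \<and> negPart (Eps b c) H \<longrightarrow> negPart (Eps a c) H)
    \<and> (\<forall>a b. negPart (Eps a b) H \<and> negPart (Eps b b) H \<longrightarrow> negPart (Eps b a) H))"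

inductive litDisj :: "fm \<Rightarrow> bool" where
  "litDisj (Eps a b)"
| "litDisj (Neg (Eps a b))"
| "litDisj A \<Longrightarrow> litDisj B \<Longrightarrow> litDisj (Disj A B)"

fun substN :: "(nat \<Rightarrow> nat) \<Rightarrow> fm \<Rightarrow> fm" where
  "substN s (Eps a b) = Eps (s a) (s b)"
| "substN s (Disj A B) = Disj (substN s A) (substN s B)"
| "substN s (Neg A) = Neg (substN s A)"

inductive refH :: "nat \<Rightarrow> fm \<Rightarrow> bool" for a0 :: nat where
  r1: "refH a0 (Eps a0 a0)"
| r2: "refH a0 (Neg (Eps a0 a0))"
| r3: "provH (Imp A B) \<Longrightarrow> refH a0 B \<Longrightarrow> refH a0 A"
| r4: "refH a0 A \<Longrightarrow> A = substN s B \<Longrightarrow> refH a0 B"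
| r5: "hintikka A \<Longrightarrow> litDisj A \<Longrightarrow> refH a0 A \<Longrightarrow> \<not> negPart (Eps a b) A
        \<Longrightarrow> refH a0 (Disj A (Eps a b))"

end

theory Submission
  imports Defs
begin

text \<open>H is complete for the relations v closed under the three axioms, so an unprovable A has
  such a countermodel v. On the names V of A, take the negated atoms true in v (collapsing all
  names to \<open>a\<^sub>0\<close> makes their disjunction imply \<open>\<sim>\<epsilon>a\<^sub>0a\<^sub>0\<close>, so it is refutable) and then add,
  one at a time, the atoms false in v. Closure of v under the axioms makes every stage a Hintikka
  formula, so the last rule of HAR refutes each extension. Any valuation falsifying the final
  disjunction agrees with v on V and therefore falsifies A; hence A implies it and is refuted.\<close>

fun names :: "fm \<Rightarrow> nat set" where
  "names (Eps a b) = {a, b}"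
| "names (Disj A B) = names A \<union> names B"
| "names (Neg A) = names A"

lemma finite_names: "finite (names A)"
  by (induction A) auto

lemma names_nonempty: "names A \<noteq> {}"
  by (induction A) auto

lemma evalf_cong_names:
  "(\<And>a b. a \<in> names A \<Longrightarrow> b \<in> names A \<Longrightarrow> v a b = w a b) \<Longrightarrow> evalf v A = evalf w A"
  by (induction A) auto

definition axiom_closed :: "(nat \<Rightarrow> nat \<Rightarrow> bool) \<Rightarrow> bool" where
  "axiom_closed v \<longleftrightarrow> (\<forall>a b. v a b \<longrightarrow> v a a) \<and> (\<forall>a b c. v a b \<and> v b c \<longrightarrow> v a c)
     \<and> (\<forall>a b. v a b \<and> v b b \<longrightarrow> v b a)"

fun imps :: "fm list \<Rightarrow> fm \<Rightarrow> fm" where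
  "imps [] A = A"
| "imps (H # Hs) A = Imp H (imps Hs A)"

lemma evalf_imps: "evalf w (imps Hs A) \<longleftrightarrow> (\<forall>H\<in>set Hs. evalf w H) \<longrightarrow> evalf w A"
  by (induction Hs) (auto simp: Imp_def)

lemma provH_imps: "\<forall>H\<in>set Hs. provH H \<Longrightarrow> provH (imps Hs A) \<Longrightarrow> provH A"
  by (induction Hs) (auto intro: provH.mp)

definition axiom_instances :: "nat list \<Rightarrow> fm list" where
  "axiom_instances vs = [Imp (Eps a b) (Eps a a). a \<leftarrow> vs, b \<leftarrow> vs]
     @ [Imp (Conj (Eps a b) (Eps b c)) (Eps a c). a \<leftarrow> vs, b \<leftarrow> vs, c \<leftarrow> vs]
     @ [Imp (Conj (Eps a b) (Eps b b)) (Eps b a). a \<leftarrow> vs, b \<leftarrow> vs]"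

lemma provH_axiom_instances: "H \<in> set (axiom_instances vs) \<Longrightarrow> provH H"
  by (auto simp: axiom_instances_def intro: provH.intros)

lemma axiom_closed_restrict:
  assumes H: "\<forall>H\<in>set (axiom_instances vs). evalf w H"
  shows "axiom_closed (\<lambda>a b. a \<in> set vs \<and> b \<in> set vs \<and> w a b)"
    (is "axiom_closed ?v")
proof -
  have "?v a a" if "?v a b" for a b
  proof -
    have "Imp (Eps a b) (Eps a a) \<in> set (axiom_instances vs)"
      using that by (auto simp: axiom_instances_def)
    then show ?thesis using H that by (auto simp: Imp_def)
  qed
  moreover have "?v a c" if "?v a b" "?v b c" for a b c
  proof -
    have "Imp (Conj (Eps a b) (Eps b c)) (Eps a c) \<in> set (axiom_instances vs)"
      using that by (auto simp: axiom_instances_def)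
    then show ?thesis using H that by (auto simp: Imp_def Conj_def)
  qed
  moreover have "?v b a" if "?v a b" "?v b b" for a b
  proof -
    have "Imp (Conj (Eps a b) (Eps b b)) (Eps b a) \<in> set (axiom_instances vs)"
      using that by (auto simp: axiom_instances_def)
    then show ?thesis using H that by (auto simp: Imp_def Conj_def)
  qed
  ultimately show ?thesis
    unfolding axiom_closed_def by blast
qed

theorem provH_complete:
  assumes "\<forall>v. axiom_closed v \<longrightarrow> evalf v A"
  shows "provH A"
proof -
  obtain vs where vs: "set vs = names A"
    using finite_list[OF finite_names] by blast
  have "taut (imps (axiom_instances vs) A)"
    unfolding taut_def evalf_imps
  proof (intro allI impI)
    fix w
    assume "\<forall>H\<in>set (axiom_instances vs). evalf w H"
    then have "evalf (\<lambda>a b. a \<in> set vs \<and> b \<in> set vs \<and> w a b) A"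
      using assms axiom_closed_restrict by blast
    moreover have "evalf (\<lambda>a b. a \<in> set vs \<and> b \<in> set vs \<and> w a b) A = evalf w A"
      by (rule evalf_cong_names) (simp add: vs)
    ultimately show "evalf w A" by simp
  qed
  then show ?thesis
    using provH_imps provH_axiom_instances provH.taut by blast
qed

fun litset :: "fm \<Rightarrow> fm set" where
  "litset (Disj A B) = litset A \<union> litset B"
| "litset A = {A}"

lemma evalf_litset: "evalf w H \<longleftrightarrow> (\<exists>l\<in>litset H. evalf w l)"
  by (induction H) auto

lemma litset_substN: "litset (substN s H) = substN s ` litset H"
  by (induction H) auto

lemma litDisj_occurrence:
  "litDisj H \<Longrightarrow> subAt H p = Some B \<Longrightarrow>
   (if polAt H p then \<forall>a b. B = Eps a b \<longrightarrow> B \<in> litset H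
    else \<exists>a b. B = Eps a b \<and> Neg B \<in> litset H)"
proof (induction H p rule: subAt.induct)
  case (4 B p)
  then show ?case by (cases p) (auto elim: litDisj.cases)
qed (auto elim: litDisj.cases)

lemma negOcc_litset:
  "litDisj H \<Longrightarrow> Neg (Eps a b) \<in> litset H \<Longrightarrow> \<exists>p. negOcc H p (Eps a b)"
proof (induction H rule: litDisj.induct)
  case (2 a' b')
  then show ?case by (auto intro: exI[of _ "[0]"] simp: negOcc_def)
next
  case (3 A B)
  then consider p where "negOcc A p (Eps a b)" | p where "negOcc B p (Eps a b)"
    by auto
  then show ?case
  proof cases
    case (1 p)
    then show ?thesis by (intro exI[of _ "0 # p"]) (simp add: negOcc_def)
  next
    case (2 p)
    then show ?thesis by (intro exI[of _ "Suc 0 # p"]) (simp add: negOcc_def)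
  qed
qed auto

lemma negPart_litDisj:
  "litDisj H \<Longrightarrow> negPart B H \<longleftrightarrow> (\<exists>a b. B = Eps a b \<and> Neg (Eps a b) \<in> litset H)"
  unfolding negPart_def using negOcc_litset litDisj_occurrence
  by (fastforce simp: negOcc_def)

lemma litDisj_with_litset:
  "finite S \<Longrightarrow> S \<noteq> {} \<Longrightarrow> \<forall>l\<in>S. litDisj l \<and> litset l = {l} \<Longrightarrow>
   \<exists>D. litDisj D \<and> litset D = S"
proof (induction S rule: finite_ne_induct)
  case (insert l S)
  then obtain D where "litDisj D" "litset D = S" by auto
  with insert.prems show ?case
    by (intro exI[of _ "Disj D l"]) (auto intro: litDisj.intros)
qed auto

definition diagram :: "nat set \<Rightarrow> (nat \<Rightarrow> nat \<Rightarrow> bool) \<Rightarrow> fm \<Rightarrow> bool" where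
  "diagram V v H \<longleftrightarrow> litDisj H
     \<and> (\<forall>a b. Neg (Eps a b) \<in> litset H \<longleftrightarrow> a \<in> V \<and> b \<in> V \<and> v a b)
     \<and> (\<forall>a b. Eps a b \<in> litset H \<longrightarrow> \<not> v a b)"

lemma hintikka_diagram:
  assumes v: "axiom_closed v" and H: "diagram V v H"
  shows "hintikka H"
proof -
  have lit: "litDisj H" using H by (simp add: diagram_def)
  have neg_eps: "negPart (Eps a b) H \<longleftrightarrow> a \<in> V \<and> b \<in> V \<and> v a b" for a b
    using H negPart_litDisj[OF lit] by (auto simp: diagram_def)
  have "\<not> clash H"
  proof
    assume "clash H"
    then obtain B p q where "posOcc H p B" "negOcc H q B"
      unfolding clash_def by blast
    then obtain a b where "Neg (Eps a b) \<in> litset H" "Eps a b \<in> litset H"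
      using litDisj_occurrence[OF lit, of p B] litDisj_occurrence[OF lit, of q B]
      by (auto simp: posOcc_def negOcc_def)
    then show False using H by (auto simp: diagram_def)
  qed
  moreover have "\<not> negPart (Disj B C) H" for B C
    using negPart_litDisj[OF lit] by auto
  ultimately show ?thesis
    using v unfolding hintikka_def neg_eps axiom_closed_def by blast
qed

lemma refH_neg_atoms:
  assumes "litDisj D" and "\<forall>l\<in>litset D. \<exists>a b. l = Neg (Eps a b)"
  shows "refH a0 D"
proof (rule refH.r4)
  have "\<forall>l\<in>litset (substN (\<lambda>_. a0) D). l = Neg (Eps a0 a0)"
    using assms(2) by (auto simp: litset_substN)
  then have "taut (Imp (substN (\<lambda>_. a0) D) (Neg (Eps a0 a0)))"
    by (auto simp: taut_def Imp_def evalf_litset[of _ "substN _ D"])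
  then show "refH a0 (substN (\<lambda>_. a0) D)"
    by (intro refH.r3[OF provH.taut refH.r2])
qed simp

lemma refutable_negative_diagram:
  assumes "finite V" "V \<noteq> {}"
  shows "\<exists>D. refH a0 D \<and> diagram V v D"
proof (cases "\<exists>a\<in>V. \<exists>b\<in>V. v a b")
  case True
  let ?S = "(\<lambda>(a, b). Neg (Eps a b)) ` {(a, b). a \<in> V \<and> b \<in> V \<and> v a b}"
  have "finite ?S" using assms(1) by (auto intro: finite_subset[of _ "V \<times> V"])
  moreover have "?S \<noteq> {}" using True by auto
  ultimately obtain D where "litDisj D" "litset D = ?S"
    using litDisj_with_litset[of ?S] by (auto intro: litDisj.intros)
  moreover have "refH a0 D"
    using calculation by (intro refH_neg_atoms) auto
  ultimately show ?thesis
    by (intro exI[of _ D]) (auto simp: diagram_def)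
next
  case False
  obtain x where "x \<in> V" using assms(2) by blast
  have "refH a0 (Eps x x)"
    by (rule refH.r4[OF refH.r1, of _ "\<lambda>_. a0"]) simp
  with False \<open>x \<in> V\<close> show ?thesis
    by (intro exI[of _ "Eps x x"]) (auto simp: diagram_def intro: litDisj.intros)
qed

lemma refH_diagram_extend:
  assumes "axiom_closed v" "diagram V v H" "refH a0 H" "\<not> v a b"
  shows "refH a0 (Disj H (Eps a b))" and "diagram V v (Disj H (Eps a b))"
proof -
  have "\<not> negPart (Eps a b) H"
    using assms(2,4) negPart_litDisj[of H] by (auto simp: diagram_def)
  then show "refH a0 (Disj H (Eps a b))"
    using assms hintikka_diagram by (auto simp: diagram_def intro: refH.r5)
  show "diagram V v (Disj H (Eps a b))"
    using assms(2,4) by (auto simp: diagram_def intro: litDisj.intros)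
qed

lemma refutable_full_diagram:
  assumes v: "axiom_closed v" and V: "finite V" "V \<noteq> {}"
  shows "\<exists>F. refH a0 F \<and> diagram V v F \<and> (\<forall>a\<in>V. \<forall>b\<in>V. \<not> v a b \<longrightarrow> Eps a b \<in> litset F)"
proof -
  have "finite S \<Longrightarrow> S \<subseteq> {(a, b). \<not> v a b} \<Longrightarrow>
        \<exists>F. refH a0 F \<and> diagram V v F \<and> (\<forall>(a, b)\<in>S. Eps a b \<in> litset F)" for S
  proof (induction S rule: finite_induct)
    case empty
    then show ?case using refutable_negative_diagram[OF V] by auto
  next
    case (insert ab S)
    obtain a b where ab: "ab = (a, b)" by fastforce
    from insert obtain F where "refH a0 F" "diagram V v F" "\<forall>(a, b)\<in>S. Eps a b \<in> litset F"
      by auto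
    with insert.prems ab show ?case
      using refH_diagram_extend[OF v] by (intro exI[of _ "Disj F (Eps a b)"]) auto
  qed
  moreover have "finite {(a, b). a \<in> V \<and> b \<in> V \<and> \<not> v a b}"
    using V(1) by (auto intro: finite_subset[of _ "V \<times> V"])
  ultimately show ?thesis
    by fastforce
qed

text \<open>A valuation falsifying F must agree with v on V.\<close>
lemma provH_imp_full_diagram:
  assumes F: "diagram V v F" "\<forall>a\<in>V. \<forall>b\<in>V. \<not> v a b \<longrightarrow> Eps a b \<in> litset F"
    and A: "names A \<subseteq> V" "\<not> evalf v A"
  shows "provH (Imp A F)"
proof (rule provH.taut, unfold taut_def, intro allI)
  fix w
  show "evalf w (Imp A F)"
  proof (cases "evalf w F")
    case False
    then have false_lits: "\<forall>l\<in>litset F. \<not> evalf w l"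
      using evalf_litset[of w F] by blast
    have "v a b = w a b" if "a \<in> V" "b \<in> V" for a b
    proof (cases "v a b")
      case True
      then have "Neg (Eps a b) \<in> litset F" using F(1) that by (simp add: diagram_def)
      then show ?thesis using True false_lits by fastforce
    next
      case False
      then have "Eps a b \<in> litset F" using F(2) that by blast
      then show ?thesis using False false_lits by fastforce
    qed
    then have "evalf v A = evalf w A"
      using A(1) by (intro evalf_cong_names) auto
    then show ?thesis using A(2) by (simp add: Imp_def)
  qed (simp add: Imp_def)
qed

theorem theorem3p2:
  fixes a0 :: nat and A :: fm
  shows "\<not> provH A \<longrightarrow> refH a0 A"
proof
  assume "\<not> provH A"
  then obtain v where v: "axiom_closed v" "\<not> evalf v A"
    using provH_complete by blast
  obtain F where F: "refH a0 F" "diagram (names A) v F"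
    "\<forall>a\<in>names A. \<forall>b\<in>names A. \<not> v a b \<longrightarrow> Eps a b \<in> litset F"
    using refutable_full_diagram[OF v(1) finite_names names_nonempty] by blast
  have "provH (Imp A F)"
    using F(2,3) v(2) by (rule provH_imp_full_diagram[OF _ _ order_refl])
  then show "refH a0 A"
    using F(1) by (rule refH.r3)
qed

end
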